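(* Let $H:\mathbb{R}^{2m}\to\mathbb{R}$ be smooth and let $\bar y\in\mathbb{R}^{2m}$ with $F'=SH_{yy}(\bar y)$ invertible. Consider the scheme $$y_{n+1}-y_n=\theta_n\,S\,\bar\nabla H(y_n,y_{n+1}),\qquad \theta_n=2\Big(SR+F'\coth\frac{h_nF'}{2}\Big)^{-1},$$ where $\bar\nabla H$ is the coordinate increment discrete gradient. Here $R=(R_{jk})$ is the antisymmetric matrix with $$R_{jk}=H_{y^jy^k}\ (k<j),\qquad R_{jj}=0,\qquad R_{jk}=-H_{y^jy^k}\ (k>j),$$ evaluated at $\bar y$. This scheme is energy-preserving: $H(y_{n+1})=H(y_n)$.
   Context: Notation: - $y=(x,p)\in\mathbb{R}^{2m}$ with $y^1,\dots,y^m$ the components of $x$ and $y^{m+1},\dots,y^{2m}$ those of $p$; $y_n=(x_n,p_n)$ and $h_n$ is the time step. - $S=\begin{pmatrix}0&1\\-1&0\end{pmatrix}$ with $m\times m$ blocks. - $H_{yy}$ is the Hessian of $H$. The coordinate increment discrete gradient has components $$\frac{\Delta H}{\Delta y^j}=\frac{H(\hat y^j_n)-H(\hat y^{j-1}_n)}{y^j_{n+1}-y^j_n},\qquad \hat y^j_n=(y^1_{n+1},\dots,y^j_{n+1},y^{j+1}_n,\dots,y^{2m}_n),$$ with the partial derivative as limit when $y^j_{n+1}=y^j_n$. *)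

theory Defs
  imports "HOL-Analysis.Analysis"
begin

text \<open>Coordinates of \<open>R^{2m}\<close> are indexed by a finite linearly ordered type \<open>'n\<close>
  with \<open>CARD('n) = 2m\<close>; the coordinate \<open>i\<close> is \<open>y^{pos i + 1}\<close>.\<close>

definition pos :: "'n::{finite,linorder} \<Rightarrow> nat" where
  "pos i = card {j. j < i}"

text \<open>The symplectic matrix \<open>S = [[0, I],[-I, 0]]\<close> with \<open>m \<times> m\<close> blocks.\<close>
definition Smat :: "real^'n::{finite,linorder}^'n::{finite,linorder}" where
  "Smat = (\<chi> i j. if pos j = pos i + CARD('n::{finite,linorder}) div 2 then 1
                   else if pos i = pos j + CARD('n::{finite,linorder}) div 2 then -1 else 0)"

fun mpow :: "real^'n::finite^'n::finite \<Rightarrow> nat \<Rightarrow> real^'n::finite^'n::finite" where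
  "mpow A 0 = mat 1"
| "mpow A (Suc k) = A ** mpow A k"

definition msinh :: "real^'n::finite^'n::finite \<Rightarrow> real^'n::finite^'n::finite" where
  "msinh A = (\<Sum>k. (1 / fact (2*k+1)) *\<^sub>R mpow A (2*k+1))"

definition mcosh :: "real^'n::finite^'n::finite \<Rightarrow> real^'n::finite^'n::finite" where
  "mcosh A = (\<Sum>k. (1 / fact (2*k)) *\<^sub>R mpow A (2*k))"

definition mcoth :: "real^'n::finite^'n::finite \<Rightarrow> real^'n::finite^'n::finite" where
  "mcoth A = mcosh A ** matrix_inv (msinh A)"

definition partial :: "'n::finite \<Rightarrow> (real^'n::finite \<Rightarrow> real) \<Rightarrow> real^'n::finite \<Rightarrow> real" where
  "partial j f y = deriv (\<lambda>t. f (y + t *\<^sub>R axis j 1)) 0"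

definition smooth_fun :: "(real^'n::finite \<Rightarrow> real) \<Rightarrow> bool" where
  "smooth_fun f \<longleftrightarrow> (\<forall>js::'n list. continuous_on UNIV (foldr partial js f) \<and>
      (\<forall>j y. (\<lambda>t. foldr partial js f (y + t *\<^sub>R axis j 1)) differentiable (at 0)))"

definition hess :: "(real^'n::finite \<Rightarrow> real) \<Rightarrow> real^'n::finite \<Rightarrow> real^'n::finite^'n::finite" where
  "hess f y = (\<chi> j k. partial j (partial k f) y)"

definition Rmat :: "(real^'n::{finite,linorder} \<Rightarrow> real) \<Rightarrow> real^'n::{finite,linorder} \<Rightarrow> real^'n::{finite,linorder}^'n::{finite,linorder}" where
  "Rmat f y = (\<chi> j k. if k < j then hess f y $ j $ k
                      else if k = j then 0 else - hess f y $ j $ k)"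

definition ci_dgrad :: "(real^'n::{finite,linorder} \<Rightarrow> real) \<Rightarrow> real^'n::{finite,linorder} \<Rightarrow> real^'n::{finite,linorder} \<Rightarrow> real^'n::{finite,linorder}" where
  "ci_dgrad f y y' = (\<chi> j.
     let a = (\<chi> k. if k < j then y' $ k else y $ k);
         b = (\<chi> k. if k \<le> j then y' $ k else y $ k)
     in if y' $ j = y $ j then partial j f a else (f b - f a) / (y' $ j - y $ j))"

end

theory Submission
  imports Defs
begin

text \<open>
  The coordinate increment discrete gradient telescopes:
  \<open>H(y') - H(y) = \<nabla>H(y, y') \<bullet> (y' - y)\<close>.  Writing \<open>\<theta>\<inverse> = S N / 2\<close> with
  \<open>N = R + H\<^sub>y\<^sub>y coth(h S H\<^sub>y\<^sub>y / 2)\<close>, the scheme says \<open>N (y' - y) = 2 \<nabla>H\<close>, so the energy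
  difference is a quadratic form \<open>w \<bullet> N w\<close>.  It vanishes because \<open>N\<close> is skew: \<open>R\<close> is skew
  by symmetry of the Hessian (Schwarz), and \<open>P f(A)\<close> is skew for every odd power series \<open>f\<close>
  (here \<open>coth = cosh / sinh\<close>) whenever \<open>P\<close> is symmetric and \<open>A = S P\<close>, since then
  \<open>A\<^sup>T P = - P A\<close>.
\<close>

section \<open>Symmetry of the Hessian\<close>

text \<open>Two applications of the mean value theorem to the second difference
  \<open>\<phi> u u - \<phi> u 0 - \<phi> 0 u + \<phi> 0 0\<close>, once in each order, give \<open>u\<^sup>2\<close> times either mixed partial.\<close>
lemma mixed_second_differences_meet:
  fixes \<phi> Ds Dt Dst Dts :: "real \<Rightarrow> real \<Rightarrow> real"
  assumes ds: "\<And>s t. ((\<lambda>s. \<phi> s t) has_real_derivative Ds s t) (at s)"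
    and dst: "\<And>s t. ((\<lambda>t. Ds s t) has_real_derivative Dst s t) (at t)"
    and dt: "\<And>s t. ((\<lambda>t. \<phi> s t) has_real_derivative Dt s t) (at t)"
    and dts: "\<And>s t. ((\<lambda>s. Dt s t) has_real_derivative Dts s t) (at s)"
    and "u > 0"
  shows "\<exists>a b c d. \<bar>a\<bar> < u \<and> \<bar>b\<bar> < u \<and> \<bar>c\<bar> < u \<and> \<bar>d\<bar> < u \<and> Dst a b = Dts c d"
proof -
  have "((\<lambda>s. \<phi> s u - \<phi> s 0) has_real_derivative Ds x u - Ds x 0) (at x)" for x
    by (intro derivative_intros ds)
  then obtain a where a: "0 < a" "a < u"
      "(\<phi> u u - \<phi> u 0) - (\<phi> 0 u - \<phi> 0 0) = u * (Ds a u - Ds a 0)"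
    using MVT2[of 0 u "\<lambda>s. \<phi> s u - \<phi> s 0" "\<lambda>s. Ds s u - Ds s 0"] \<open>u > 0\<close> by auto
  obtain b where b: "0 < b" "b < u" "Ds a u - Ds a 0 = u * Dst a b"
    using MVT2[of 0 u "\<lambda>t. Ds a t" "\<lambda>t. Dst a t"] \<open>u > 0\<close> dst by auto
  have "((\<lambda>t. \<phi> u t - \<phi> 0 t) has_real_derivative Dt u x - Dt 0 x) (at x)" for x
    by (intro derivative_intros dt)
  then obtain d where d: "0 < d" "d < u"
      "(\<phi> u u - \<phi> 0 u) - (\<phi> u 0 - \<phi> 0 0) = u * (Dt u d - Dt 0 d)"
    using MVT2[of 0 u "\<lambda>t. \<phi> u t - \<phi> 0 t" "\<lambda>t. Dt u t - Dt 0 t"] \<open>u > 0\<close> by auto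
  obtain c where c: "0 < c" "c < u" "Dt u d - Dt 0 d = u * Dts c d"
    using MVT2[of 0 u "\<lambda>s. Dt s d" "\<lambda>s. Dts s d"] \<open>u > 0\<close> dts by auto
  have "u * (u * Dst a b) = u * (u * Dts c d)"
    using a(3) b(3) c(3) d(3) by (auto simp: algebra_simps)
  then have "Dst a b = Dts c d" using \<open>u > 0\<close> by simp
  with a b c d show ?thesis
    by (intro exI[of _ a] exI[of _ b] exI[of _ c] exI[of _ d]) auto
qed

lemma mixed_partials_eq:
  fixes \<phi> Ds Dt Dst Dts :: "real \<Rightarrow> real \<Rightarrow> real"
  assumes ds: "\<And>s t. ((\<lambda>s. \<phi> s t) has_real_derivative Ds s t) (at s)"
    and dst: "\<And>s t. ((\<lambda>t. Ds s t) has_real_derivative Dst s t) (at t)"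
    and dt: "\<And>s t. ((\<lambda>t. \<phi> s t) has_real_derivative Dt s t) (at t)"
    and dts: "\<And>s t. ((\<lambda>s. Dt s t) has_real_derivative Dts s t) (at s)"
    and cst: "isCont (\<lambda>z. Dst (fst z) (snd z)) (0, 0)"
    and cts: "isCont (\<lambda>z. Dts (fst z) (snd z)) (0, 0)"
  shows "Dst 0 0 = Dts 0 0"
proof -
  have "\<forall>n. \<exists>a b c d. \<bar>a\<bar> < inverse (real (Suc n)) \<and> \<bar>b\<bar> < inverse (real (Suc n)) \<and>
      \<bar>c\<bar> < inverse (real (Suc n)) \<and> \<bar>d\<bar> < inverse (real (Suc n)) \<and> Dst a b = Dts c d"
    using mixed_second_differences_meet[OF ds dst dt dts] by simp
  then obtain a b c d where abcd: "\<And>n. \<bar>a n\<bar> < inverse (real (Suc n)) \<and> \<bar>b n\<bar> < inverse (real (Suc n)) \<and>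
      \<bar>c n\<bar> < inverse (real (Suc n)) \<and> \<bar>d n\<bar> < inverse (real (Suc n)) \<and> Dst (a n) (b n) = Dts (c n) (d n)"
    by metis
  have null: "x \<longlonglongrightarrow> 0" if "\<And>n. \<bar>x n\<bar> < inverse (real (Suc n))" for x :: "nat \<Rightarrow> real"
    using that by (intro Lim_null_comparison[OF _ LIMSEQ_inverse_real_of_nat]) (simp add: less_imp_le)
  have lim: "a \<longlonglongrightarrow> 0" "b \<longlonglongrightarrow> 0" "c \<longlonglongrightarrow> 0" "d \<longlonglongrightarrow> 0"
    using abcd by (meson null)+
  have eq: "Dst (a n) (b n) = Dts (c n) (d n)" for n
    using abcd by blast
  have "(\<lambda>n. Dst (a n) (b n)) \<longlonglongrightarrow> Dst 0 0"
    using isCont_tendsto_compose[OF cst tendsto_Pair[OF lim(1,2)]] by simp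
  moreover have "(\<lambda>n. Dst (a n) (b n)) \<longlonglongrightarrow> Dts 0 0"
    using isCont_tendsto_compose[OF cts tendsto_Pair[OF lim(3,4)]] by (simp add: eq)
  ultimately show ?thesis by (rule LIMSEQ_unique)
qed

lemma has_real_derivative_partial:
  assumes "\<And>y. (\<lambda>t. g (y + t *\<^sub>R axis j 1)) differentiable (at 0)"
  shows "((\<lambda>t. g (y + t *\<^sub>R axis j (1::real))) has_real_derivative
           partial j g (y + s *\<^sub>R axis j 1)) (at s)"
proof -
  let ?y = "y + s *\<^sub>R axis j 1"
  have "((\<lambda>t. g (?y + t *\<^sub>R axis j 1)) has_real_derivative partial j g ?y) (at 0)"
    using assms[of ?y] unfolding partial_def by (simp add: DERIV_deriv_iff_real_differentiable)
  moreover have "(\<lambda>t. g (?y + t *\<^sub>R axis j 1)) = (\<lambda>t. g (y + (t + s) *\<^sub>R axis j (1::real)))"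
    by (auto simp: algebra_simps)
  ultimately show ?thesis
    using DERIV_shift[of "\<lambda>t. g (y + t *\<^sub>R axis j (1::real))" "partial j g ?y" 0 s] by simp
qed

lemma smooth_fun_partial: "smooth_fun f \<Longrightarrow> smooth_fun (partial j f)"
proof (unfold smooth_fun_def, intro allI conjI)
  fix js :: "'a list" and i y
  assume "\<forall>js::'a list. continuous_on UNIV (foldr partial js f) \<and>
      (\<forall>j y. (\<lambda>t. foldr partial js f (y + t *\<^sub>R axis j 1)) differentiable (at 0))"
  moreover have "foldr partial js (partial j f) = foldr partial (js @ [j]) f" by simp
  ultimately show "continuous_on UNIV (foldr partial js (partial j f))"
    and "(\<lambda>t. foldr partial js (partial j f) (y + t *\<^sub>R axis i 1)) differentiable (at 0)"
    by metis+
qed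

lemma smooth_fun_differentiable:
  "smooth_fun f \<Longrightarrow> (\<lambda>t. f (y + t *\<^sub>R axis j 1)) differentiable (at 0)"
  unfolding smooth_fun_def by (metis foldr_Nil id_apply)

lemma smooth_fun_isCont: "smooth_fun f \<Longrightarrow> isCont f y"
  unfolding smooth_fun_def by (metis foldr_Nil id_apply continuous_on_eq_continuous_at open_UNIV UNIV_I)

lemma partial_partial_commute:
  fixes f :: "real^'n \<Rightarrow> real"
  assumes "smooth_fun f"
  shows "partial k (partial j f) y = partial j (partial k f) y"
proof -
  define p where "p s t = y + s *\<^sub>R axis j (1::real) + t *\<^sub>R axis k 1" for s t
  have p_j: "p s t = (y + t *\<^sub>R axis k 1) + s *\<^sub>R axis j 1"
   and p_k: "p s t = (y + s *\<^sub>R axis j 1) + t *\<^sub>R axis k 1" for s t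
    by (simp_all add: p_def algebra_simps)
  have "smooth_fun (partial j f)" "smooth_fun (partial k f)"
    using assms by (simp_all add: smooth_fun_partial)
  note smooth = assms this
  have cont: "isCont (\<lambda>z. g (p (fst z) (snd z))) (0, 0)" if "smooth_fun g" for g
    using that unfolding p_def by (intro isCont_o2[OF _ smooth_fun_isCont]) (auto intro!: continuous_intros)
  have deriv_s: "((\<lambda>s. g (p s t)) has_real_derivative partial j g (p s t)) (at s)"
    if "smooth_fun g" for g s t
    unfolding p_j by (rule has_real_derivative_partial[OF smooth_fun_differentiable[OF that]])
  have deriv_t: "((\<lambda>t. g (p s t)) has_real_derivative partial k g (p s t)) (at t)"
    if "smooth_fun g" for g s t
    unfolding p_k by (rule has_real_derivative_partial[OF smooth_fun_differentiable[OF that]])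
  have "partial k (partial j f) (p 0 0) = partial j (partial k f) (p 0 0)"
    by (rule mixed_partials_eq[OF deriv_s[OF smooth(1)] deriv_t[OF smooth(2)]
          deriv_t[OF smooth(1)] deriv_s[OF smooth(3)]
          cont[OF smooth_fun_partial[OF smooth(2)]] cont[OF smooth_fun_partial[OF smooth(3)]]])
  then show ?thesis by (simp add: p_def)
qed

lemma transpose_hess: "smooth_fun f \<Longrightarrow> transpose (hess f y) = hess f y"
  by (simp add: hess_def transpose_def vec_eq_iff partial_partial_commute)

lemma transpose_Rmat: "smooth_fun f \<Longrightarrow> transpose (Rmat f y) = - Rmat f y"
  by (auto simp: Rmat_def transpose_def vec_eq_iff hess_def partial_partial_commute
           dest: not_less_iff_gr_or_eq[THEN iffD1])

section \<open>The coordinate increment discrete gradient\<close>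

lemma pos_less_iff: "pos (i::'n::{finite,linorder}) < pos i' \<longleftrightarrow> i < i'"
proof -
  have "pos i < pos i'" if "i < i'" for i i' :: 'n
    unfolding pos_def using that by (intro psubset_card_mono) auto
  then show ?thesis by (metis not_less_iff_gr_or_eq order_less_asym)
qed

lemma pos_le_iff: "pos (i::'n::{finite,linorder}) \<le> pos i' \<longleftrightarrow> i \<le> i'"
  by (meson not_le pos_less_iff)

lemma inj_pos: "inj (pos :: 'n::{finite,linorder} \<Rightarrow> nat)"
  by (rule injI) (metis nat_neq_iff pos_less_iff not_less_iff_gr_or_eq)

lemma pos_less_card: "pos (i::'n::{finite,linorder}) < CARD('n)"
  unfolding pos_def by (rule psubset_card_mono) auto

lemma bij_betw_pos: "bij_betw (pos :: 'n::{finite,linorder} \<Rightarrow> nat) UNIV {..<CARD('n)}"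
proof -
  have "range (pos :: 'n \<Rightarrow> nat) \<subseteq> {..<CARD('n)}"
    using pos_less_card by auto
  moreover have "card (range (pos :: 'n \<Rightarrow> nat)) = CARD('n)"
    using card_image[OF inj_pos] by simp
  ultimately have "range (pos :: 'n \<Rightarrow> nat) = {..<CARD('n)}"
    by (intro card_subset_eq) auto
  with inj_pos show ?thesis by (simp add: bij_betw_def)
qed

lemma ci_dgrad_inner:
  fixes f :: "real^'n::{finite,linorder} \<Rightarrow> real"
  shows "ci_dgrad f y y' \<bullet> (y' - y) = f y' - f y"
proof -
  define z where "z k = (\<chi> i. if pos i < k then y' $ i else y $ i)" for k
  have "f y' - f y = (\<Sum>k<CARD('n). f (z (Suc k)) - f (z k))"
    using sum_lessThan_telescope[of "\<lambda>k. f (z k)" "CARD('n)"]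
    by (simp add: z_def vec_eq_iff pos_less_card)
  also have "\<dots> = (\<Sum>i::'n\<in>UNIV. f (z (Suc (pos i))) - f (z (pos i)))"
    by (rule sum.reindex_bij_betw[OF bij_betw_pos, symmetric])
  also have "\<dots> = (\<Sum>i\<in>UNIV. ci_dgrad f y y' $ i * (y' - y) $ i)"
  proof (rule sum.cong[OF refl])
    fix i :: 'n
    show "f (z (Suc (pos i))) - f (z (pos i)) = ci_dgrad f y y' $ i * (y' - y) $ i"
    proof (cases "y' $ i = y $ i")
      case True
      then have "z (Suc (pos i)) = z (pos i)"
        by (auto simp: z_def vec_eq_iff less_Suc_eq dest: inj_pos[THEN injD])
      with True show ?thesis by simp
    next
      case False
      have "(\<chi> k. if k < i then y' $ k else y $ k) = z (pos i)"
        and "(\<chi> k. if k \<le> i then y' $ k else y $ k) = z (Suc (pos i))"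
        by (simp_all add: z_def vec_eq_iff pos_less_iff less_Suc_eq_le pos_le_iff)
      with False show ?thesis unfolding ci_dgrad_def Let_def by simp
    qed
  qed
  finally show ?thesis by (simp add: inner_vec_def)
qed

section \<open>Matrix power series\<close>

lemma matrix_mul_scaleR_right: "(A::real^'n^'m) ** (k *\<^sub>R B) = k *\<^sub>R (A ** (B::real^'p^'n))"
  by (simp add: matrix_scalar_ac scalar_matrix_assoc)

lemma matrix_mul_scaleR_left: "(k *\<^sub>R (A::real^'n^'m)) ** B = k *\<^sub>R (A ** (B::real^'p^'n))"
  by (simp add: scalar_matrix_assoc)

lemma matrix_add_rdistrib: "((A::real^'n^'m) + B) ** (C::real^'p^'n) = A ** C + B ** C"
  by (simp add: matrix_matrix_mult_def sum.distrib distrib_right vec_eq_iff)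

lemma matrix_mul_uminus_left: "(- (A::real^'n^'m)) ** (C::real^'p^'n) = - (A ** C)"
  by (simp add: matrix_matrix_mult_def sum_negf vec_eq_iff)

lemma matrix_mul_uminus_right: "(A::real^'n^'m) ** (- C::real^'p^'n) = - (A ** C)"
  by (simp add: matrix_matrix_mult_def sum_negf vec_eq_iff)

lemma transpose_add: "transpose (A + B) = transpose A + transpose (B :: real^'n^'m)"
  by (simp add: transpose_def vec_eq_iff)

lemma bounded_linear_matrix_mul_left: "bounded_linear (\<lambda>X::real^'n^'m. X ** (P::real^'p^'n))"
  unfolding linear_conv_bounded_linear[symmetric]
  by (rule linearI) (simp_all add: matrix_add_rdistrib matrix_mul_scaleR_left)

lemma bounded_linear_matrix_mul_right: "bounded_linear (\<lambda>X::real^'p^'n. (P::real^'n^'m) ** X)"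
  unfolding linear_conv_bounded_linear[symmetric]
  by (rule linearI) (simp_all add: matrix_add_ldistrib matrix_mul_scaleR_right)

lemma bounded_linear_transpose: "bounded_linear (transpose :: real^'n^'m \<Rightarrow> real^'m^'n)"
  unfolding linear_conv_bounded_linear[symmetric]
  by (rule linearI) (simp_all add: transpose_def vec_eq_iff)

lemma norm_matrix_mul_le:
  fixes A B :: "real^'n^'n"
  shows "norm (A ** B) \<le> real CARD('n) ^ 3 * (norm A * norm B)"
proof -
  let ?N = "real CARD('n)"
  have entry: "\<bar>M $ i $ k\<bar> \<le> norm M" for M :: "real^'n^'n" and i k
    by (rule order_trans[OF component_le_norm_cart Finite_Cartesian_Product.norm_nth_le])
  have entry_bound: "\<bar>(A ** B) $ i $ j\<bar> \<le> ?N * (norm A * norm B)" for i j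
  proof -
    have "\<bar>(A ** B) $ i $ j\<bar> \<le> (\<Sum>k\<in>UNIV. \<bar>A $ i $ k * B $ k $ j\<bar>)"
      unfolding matrix_matrix_mult_def by (simp add: sum_abs)
    also have "\<dots> \<le> (\<Sum>k\<in>(UNIV::'n set). norm A * norm B)"
      by (intro sum_mono) (simp add: abs_mult mult_mono entry)
    finally show ?thesis by simp
  qed
  have row_bound: "norm ((A ** B) $ i) \<le> ?N * (?N * (norm A * norm B))" for i
  proof -
    have "norm ((A ** B) $ i) \<le> (\<Sum>j\<in>UNIV. \<bar>(A ** B) $ i $ j\<bar>)"
      by (rule norm_le_l1_cart)
    also have "\<dots> \<le> (\<Sum>j\<in>(UNIV::'n set). ?N * (norm A * norm B))"
      by (intro sum_mono entry_bound)
    finally show ?thesis by simp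
  qed
  then have "norm (A ** B) \<le> (\<Sum>i\<in>(UNIV::'n set). ?N * (?N * (norm A * norm B)))"
    unfolding norm_vec_def by (intro order_trans[OF L2_set_le_sum sum_mono] row_bound) simp
  then show ?thesis by (simp add: power3_eq_cube mult_ac)
qed

lemma norm_mpow_le:
  fixes A :: "real^'n::finite^'n"
  shows "norm (mpow A n) \<le> norm (mat 1 :: real^'n^'n) * (real CARD('n) ^ 3 * norm A) ^ n"
proof (induction n)
  case (Suc n)
  have "norm (mpow A (Suc n)) \<le> real CARD('n) ^ 3 * (norm A * norm (mpow A n))"
    using norm_matrix_mul_le[of A "mpow A n"] by simp
  also have "\<dots> \<le> real CARD('n) ^ 3 * (norm A * (norm (mat 1 :: real^'n^'n) * (real CARD('n) ^ 3 * norm A) ^ n))"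
    by (intro mult_left_mono Suc) auto
  finally show ?case by (simp add: mult_ac)
qed simp

lemma summable_mpow_parity_series:
  fixes A :: "real^'n::finite^'n"
  shows "summable (\<lambda>k. (1 / fact (2*k+r)) *\<^sub>R mpow A (2*k+r))"
proof (rule summable_comparison_test'[where N=0])
  define B where "B = real CARD('n) ^ 3 * norm A"
  have "B \<ge> 0" by (simp add: B_def)
  show "summable (\<lambda>k. norm (mat 1 :: real^'n^'n) * (B ^ r * (inverse (fact k) * (B\<^sup>2) ^ k)))"
    by (intro summable_mult summable_exp)
  fix k
  have "(1 / fact (2*k+r)) * B ^ (2*k+r) \<le> B ^ (2*k+r) / fact k"
    using \<open>B \<ge> 0\<close> by (simp add: divide_left_mono fact_mono)
  also have "\<dots> = B ^ r * (inverse (fact k) * (B\<^sup>2) ^ k)"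
    by (simp add: power_add power_mult[symmetric] divide_inverse mult_ac)
  finally have coeff_bound: "(1 / fact (2*k+r)) * B ^ (2*k+r) \<le> B ^ r * (inverse (fact k) * (B\<^sup>2) ^ k)" .
  have "norm ((1 / fact (2*k+r)) *\<^sub>R mpow A (2*k+r))
      \<le> (1 / fact (2*k+r)) * (norm (mat 1 :: real^'n^'n) * B ^ (2*k+r))"
    using norm_mpow_le[of A "2*k+r"] by (simp add: B_def divide_right_mono)
  also have "\<dots> \<le> norm (mat 1 :: real^'n^'n) * (B ^ r * (inverse (fact k) * (B\<^sup>2) ^ k))"
    using mult_left_mono[OF coeff_bound norm_ge_zero[of "mat 1 :: real^'n^'n"]] by (simp add: mult_ac)
  finally show "norm ((1 / fact (2*k+r)) *\<^sub>R mpow A (2*k+r))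
      \<le> norm (mat 1 :: real^'n^'n) * (B ^ r * (inverse (fact k) * (B\<^sup>2) ^ k))" .
qed

lemma summable_msinh: "summable (\<lambda>k. (1 / fact (2*k+1)) *\<^sub>R mpow (A::real^'n::finite^'n) (2*k+1))"
  by (rule summable_mpow_parity_series)

lemma summable_mcosh: "summable (\<lambda>k. (1 / fact (2*k)) *\<^sub>R mpow (A::real^'n::finite^'n) (2*k))"
  using summable_mpow_parity_series[where r=0] by simp

lemma mpow_commute:
  fixes A B :: "real^'n::finite^'n"
  assumes "B ** A = A ** B"
  shows "mpow A n ** B = B ** mpow A n"
proof (induction n)
  case (Suc n)
  have "mpow A (Suc n) ** B = A ** (mpow A n ** B)" by (simp add: matrix_mul_assoc)
  also have "\<dots> = (A ** B) ** mpow A n" by (simp add: Suc matrix_mul_assoc)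
  also have "\<dots> = B ** mpow A (Suc n)" by (simp add: assms[symmetric] matrix_mul_assoc)
  finally show ?case .
qed simp

lemma suminf_mpow_commute:
  fixes A B :: "real^'n::finite^'n"
  assumes "summable (\<lambda>k. a k *\<^sub>R mpow A (d k))" and "B ** A = A ** B"
  shows "(\<Sum>k. a k *\<^sub>R mpow A (d k)) ** B = B ** (\<Sum>k. a k *\<^sub>R mpow A (d k))"
proof -
  have "(\<Sum>k. a k *\<^sub>R mpow A (d k)) ** B = (\<Sum>k. (a k *\<^sub>R mpow A (d k)) ** B)"
    by (rule bounded_linear.suminf[OF bounded_linear_matrix_mul_left assms(1)])
  also have "\<dots> = (\<Sum>k. B ** (a k *\<^sub>R mpow A (d k)))"
    by (simp add: matrix_mul_scaleR_left matrix_mul_scaleR_right mpow_commute[OF assms(2)])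
  also have "\<dots> = B ** (\<Sum>k. a k *\<^sub>R mpow A (d k))"
    by (rule bounded_linear.suminf[OF bounded_linear_matrix_mul_right assms(1), symmetric])
  finally show ?thesis .
qed

lemma mcosh_msinh_commute: "mcosh A ** msinh A = msinh A ** mcosh A"
proof -
  have "msinh A ** A = A ** msinh A"
    unfolding msinh_def by (rule suminf_mpow_commute[OF summable_msinh]) simp
  then show ?thesis
    unfolding mcosh_def by (rule suminf_mpow_commute[OF summable_mcosh])
qed

lemma transpose_mpow: "transpose (mpow A n) = mpow (transpose A) n"
  by (induction n) (simp_all add: matrix_transpose_mul mpow_commute)

lemma mpow_transpose_mult:
  fixes A P :: "real^'n::finite^'n"
  assumes "transpose A ** P = - (P ** A)"
  shows "mpow (transpose A) n ** P = (-1) ^ n *\<^sub>R (P ** mpow A n)"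
proof (induction n)
  case (Suc n)
  have "mpow (transpose A) (Suc n) ** P = transpose A ** (mpow (transpose A) n ** P)"
    by (simp add: matrix_mul_assoc)
  also have "\<dots> = (-1) ^ n *\<^sub>R ((transpose A ** P) ** mpow A n)"
    by (simp add: Suc matrix_mul_scaleR_right matrix_mul_assoc)
  also have "\<dots> = (-1) ^ Suc n *\<^sub>R (P ** mpow A (Suc n))"
    by (simp add: assms matrix_mul_uminus_left matrix_mul_assoc)
  finally show ?case .
qed simp

lemma transpose_mpow_series_mult:
  fixes A P :: "real^'n::finite^'n"
  assumes summable: "summable (\<lambda>k. a k *\<^sub>R mpow A (d k))"
    and skew: "transpose A ** P = - (P ** A)"
    and parity: "\<And>k. (-1::real) ^ d k = \<sigma>"
  shows "transpose (\<Sum>k. a k *\<^sub>R mpow A (d k)) ** P = \<sigma> *\<^sub>R (P ** (\<Sum>k. a k *\<^sub>R mpow A (d k)))"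
proof -
  have bl: "bounded_linear (\<lambda>X::real^'n^'n. transpose X ** P)"
    using bounded_linear_compose[OF bounded_linear_matrix_mul_left[where P=P]
        bounded_linear_transpose[where 'n='n and 'm='n]]
    by (simp add: o_def)
  have bl': "bounded_linear (\<lambda>X::real^'n^'n. \<sigma> *\<^sub>R (P ** X))"
    using bounded_linear_compose[OF bounded_linear_scaleR_right
        bounded_linear_matrix_mul_right[where P=P and 'p='n]]
    by (simp add: o_def)
  have "transpose (\<Sum>k. a k *\<^sub>R mpow A (d k)) ** P = (\<Sum>k. transpose (a k *\<^sub>R mpow A (d k)) ** P)"
    by (rule bounded_linear.suminf[OF bl summable])
  also have "\<dots> = (\<Sum>k. \<sigma> *\<^sub>R (P ** (a k *\<^sub>R mpow A (d k))))"
    by (simp add: transpose_scalar transpose_mpow matrix_mul_scaleR_left matrix_mul_scaleR_right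
        mpow_transpose_mult[OF skew] parity mult.commute)
  also have "\<dots> = \<sigma> *\<^sub>R (P ** (\<Sum>k. a k *\<^sub>R mpow A (d k)))"
    by (rule bounded_linear.suminf[OF bl' summable, symmetric])
  finally show ?thesis .
qed

lemma transpose_msinh_mult:
  fixes A P :: "real^'n::finite^'n"
  assumes "transpose A ** P = - (P ** A)"
  shows "transpose (msinh A) ** P = - (P ** msinh A)"
  using transpose_mpow_series_mult[OF summable_msinh assms, of "-1"] unfolding msinh_def by simp

lemma transpose_mcosh_mult:
  fixes A P :: "real^'n::finite^'n"
  assumes "transpose A ** P = - (P ** A)"
  shows "transpose (mcosh A) ** P = P ** mcosh A"
  using transpose_mpow_series_mult[OF summable_mcosh assms, of 1] unfolding mcosh_def
  by (simp add: power_mult)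

lemma matrix_inv_right: "invertible X \<Longrightarrow> X ** matrix_inv X = mat 1"
  and matrix_inv_left: "invertible X \<Longrightarrow> matrix_inv X ** X = mat 1"
  unfolding invertible_def matrix_inv_def by (metis (mono_tags, lifting) someI_ex)+

section \<open>Energy conservation\<close>

lemma transpose_mult_mcoth:
  fixes A P :: "real^'n::finite^'n"
  assumes P: "transpose P = P" and A: "transpose A ** P = - (P ** A)"
    and "invertible (msinh A)"
  shows "transpose (P ** mcoth A) = - (P ** mcoth A)"
proof -
  define s c s' where "s = msinh A" and "c = mcosh A" and "s' = matrix_inv s"
  have ss': "s ** s' = mat 1" and s's: "s' ** s = mat 1"
    using assms(3) by (simp_all add: s_def s'_def matrix_inv_left matrix_inv_right)
  have "transpose s' ** P = (transpose s' ** (P ** s)) ** s'"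
    by (simp only: matrix_mul_assoc[symmetric] ss' matrix_mul_rid)
  also have "\<dots> = (transpose s' ** (- (transpose s ** P))) ** s'"
    using transpose_msinh_mult[OF A] by (simp add: s_def)
  also have "\<dots> = - (((transpose s' ** transpose s) ** P) ** s')"
    by (simp only: matrix_mul_uminus_left matrix_mul_uminus_right matrix_mul_assoc)
  also have "\<dots> = - (P ** s')"
    by (simp add: matrix_transpose_mul[symmetric] ss')
  finally have s'_skew: "transpose s' ** P = - (P ** s')" .
  have "s' ** c = s' ** (c ** s) ** s'"
    by (simp only: matrix_mul_assoc[symmetric] ss' matrix_mul_rid)
  also have "\<dots> = c ** s'"
    using mcosh_msinh_commute[of A]
    by (simp only: s_def[symmetric] c_def[symmetric] matrix_mul_assoc s's matrix_mul_lid)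
  finally have "s' ** c = c ** s'" .
  have coth: "mcoth A = c ** s'"
    by (simp add: mcoth_def c_def s_def s'_def)
  have "transpose (P ** mcoth A) = transpose s' ** (transpose c ** P)"
    by (simp add: coth matrix_transpose_mul P matrix_mul_assoc)
  also have "\<dots> = - (P ** (s' ** c))"
    by (simp add: transpose_mcosh_mult[OF A] c_def matrix_mul_assoc s'_skew matrix_mul_uminus_left)
  finally show ?thesis
    by (simp only: coth \<open>s' ** c = c ** s'\<close>)
qed

lemma inner_skew_self:
  fixes N :: "real^'n::finite^'n"
  assumes "transpose N = - N"
  shows "(N *v w) \<bullet> w = 0"
proof -
  have "(N *v w) \<bullet> w = w \<bullet> (N *v w)" by (simp add: inner_commute)
  also have "\<dots> = (w v* N) \<bullet> w" by (simp add: dot_lmul_matrix)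
  also have "\<dots> = (transpose N *v w) \<bullet> w" by simp
  also have "\<dots> = - ((N *v w) \<bullet> w)"
    by (simp add: assms matrix_vector_mult_def inner_vec_def sum_negf vec_eq_iff)
  finally show ?thesis by simp
qed

lemma ci_dgrad_step_conserves:
  fixes f :: "real^'n::{finite,linorder} \<Rightarrow> real" and S N :: "real^'n::{finite,linorder}^'n::{finite,linorder}"
  assumes "transpose N = - N" and "invertible (S ** N)"
    and step: "y' - y = (c *\<^sub>R matrix_inv (S ** N)) *v (S *v ci_dgrad f y y')"
  shows "f y' = f y"
proof -
  have "invertible S"
    using matrix_inv_right[OF assms(2)] by (metis invertible_right_inverse matrix_mul_assoc)
  define g where "g = ci_dgrad f y y'"
  define w where "w = matrix_inv (S ** N) *v (S *v g)"
  have "(S ** N) *v w = S *v g"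
    unfolding w_def matrix_vector_mul_assoc[of "S ** N" "matrix_inv (S ** N)" "S *v g"]
    by (simp add: matrix_inv_right[OF assms(2)])
  then have "S *v (N *v w) = S *v g"
    by (simp add: matrix_vector_mul_assoc)
  then have Nw: "N *v w = g"
    using inj_matrix_vector_mult[OF \<open>invertible S\<close>] by (auto dest: injD)
  have increment: "y' - y = c *\<^sub>R w"
    using step by (simp add: g_def w_def scaleR_matrix_vector_assoc[symmetric])
  have "f y' - f y = g \<bullet> (y' - y)"
    by (simp add: g_def ci_dgrad_inner)
  also have "\<dots> = c * ((N *v w) \<bullet> w)"
    by (simp add: increment Nw)
  also have "\<dots> = 0"
    by (simp add: inner_skew_self[OF assms(1)])
  finally show ?thesis by simp
qed

lemma transpose_Smat:
  assumes "even CARD('n::{finite,linorder})"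
  shows "transpose (Smat :: real^'n::{finite,linorder}^'n::{finite,linorder}) = - Smat"
proof -
  have "CARD('n) \<noteq> 0" by simp
  with assms have "CARD('n) div 2 > 0" by presburger
  then show ?thesis
    unfolding Smat_def transpose_def vec_eq_iff by auto
qed

theorem proposition6p11:
  fixes H :: "real^'n::{finite,linorder} \<Rightarrow> real"
    and ybar y y' :: "real^'n::{finite,linorder}" and h :: real and F' \<theta> :: "real^'n::{finite,linorder}^'n::{finite,linorder}"
  assumes even: "even CARD('n::{finite,linorder})"
    and smooth: "smooth_fun H"
    and F': "F' = Smat ** hess H ybar"
    and "invertible F'"
    and sinh: "invertible (msinh ((h / 2) *\<^sub>R F'))"
    and inv: "invertible (Smat ** Rmat H ybar + F' ** mcoth ((h / 2) *\<^sub>R F'))"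
    and \<theta>: "\<theta> = 2 *\<^sub>R matrix_inv (Smat ** Rmat H ybar + F' ** mcoth ((h / 2) *\<^sub>R F'))"
    and step: "y' - y = \<theta> *v (Smat *v ci_dgrad H y y')"
  shows "H y' = H y"
proof -
  define P where "P = hess H ybar"
  define N where "N = Rmat H ybar + P ** mcoth ((h / 2) *\<^sub>R F')"
  have P_symm: "transpose P = P"
    unfolding P_def by (rule transpose_hess[OF smooth])
  have "transpose ((h / 2) *\<^sub>R F') ** P = - (P ** ((h / 2) *\<^sub>R F'))"
    by (simp add: F' P_def[symmetric] transpose_scalar matrix_transpose_mul P_symm transpose_Smat[OF even]
        matrix_mul_scaleR_left matrix_mul_scaleR_right matrix_mul_uminus_left matrix_mul_uminus_right
        matrix_mul_assoc)
  then have "transpose (P ** mcoth ((h / 2) *\<^sub>R F')) = - (P ** mcoth ((h / 2) *\<^sub>R F'))"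
    using P_symm sinh by (intro transpose_mult_mcoth)
  then have "transpose N = - N"
    using transpose_Rmat[OF smooth] by (simp add: N_def transpose_add)
  moreover have "Smat ** N = Smat ** Rmat H ybar + F' ** mcoth ((h / 2) *\<^sub>R F')"
    by (simp add: N_def F' P_def matrix_add_ldistrib matrix_mul_assoc)
  ultimately show ?thesis
    using inv step unfolding \<theta> by (metis ci_dgrad_step_conserves)
qed

end
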